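(* Let $X$ be a finite alphabet, $L\subseteq X^*$ a regular language and $L^{\mathrm{rev}}$ its reversal. (a) The algebra $(Q,\delta_a,i)$ underlying the minimal deterministic automaton of $L$ (forgetting final states) is isomorphic to the dual $F$-algebra of the smallest subcoalgebra of $\mathsf{Reg}(X)$ containing $L^{\mathrm{rev}}$ (i.e. the smallest boolean subalgebra of $\mathsf{Reg}(X)$ containing $L^{\mathrm{rev}}$ and closed under all left derivatives $a^{-1}(-)$, with the restricted structure). (b) The $F$-algebra associated to the syntactic monoid $e_L:X^*\twoheadrightarrow\mathrm{Syn}(L)$ (states $\mathrm{Syn}(L)$, initial state the unit, transitions $m\mapsto m\cdot e_L(a)$) is isomorphic to the dual $F$-algebra of the smallest local variety of languages containing $L^{\mathrm{rev}}$.
   Context: $F$ is the endofunctor $FQ=1+X\times Q$ on $\mathbf{Set}$; an $F$-algebra is a triple $(Q,(\delta_a)_{a\in X},i)$ with maps $\delta_a:Q\to Q$ and an initial state $i\in Q$. $\overline{T}$ is the endofunctor $\overline{T}B=\{0,1\}\times B^X$ on boolean algebras; a $\overline{T}$-coalgebra is $(B,(\gamma_a)_{a\in X},f)$ with boolean homomorphisms $\gamma_a:B\to B$ and $f:B\to\{0,1\}$. The dual $F$-algebra of a finite $\overline{T}$-coalgebra $(B,\gamma_a,f)$ has as states the atoms of $B$, initial state the unique atom $z$ with $f(z)=1$, and a transition $z\xrightarrow{a}z'$ iff $z'$ is the unique atom with $\gamma_a(z')\geq z$ (this is a restriction of Stone duality, giving a dual equivalence between finite $\overline{T}$-coalgebras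 and finite $F$-algebras). $\mathsf{Reg}(X)$ is the boolean algebra of regular languages over $X$ made into a $\overline{T}$-coalgebra by $f(K)=1$ iff $\varepsilon\in K$ and $\gamma_a(K)=a^{-1}K=\{w: aw\in K\}$. A subcoalgebra of $\mathsf{Reg}(X)$ is a boolean subalgebra closed under all $a^{-1}(-)$. A local variety of languages is a subcoalgebra closed moreover under right derivatives $Ka^{-1}=\{w: wa\in K\}$. $L^{\mathrm{rev}}=\{a_n\cdots a_1: a_1\cdots a_n\in L\}$. The syntactic monoid of $L$ is $X^*/\!\sim$ with $u\sim v$ iff for all $x,y\in X^*$: $xuy\in L\Leftrightarrow xvy\in L$, and $e_L$ is the quotient map. *)

theory Defs
  imports Main
begin

definition regular :: "'a list set \<Rightarrow> bool" where
  "regular L \<longleftrightarrow> (\<exists>(Q::nat set) d q0 Fin. finite Q \<and> q0 \<in> Q \<and> Fin \<subseteq> Q \<and>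
     (\<forall>a q. q \<in> Q \<longrightarrow> d a q \<in> Q) \<and> L = {w. fold d w q0 \<in> Fin})"

definition Reg :: "'a list set set" where
  "Reg = {K. regular K}"

definition lderiv :: "'a \<Rightarrow> 'a list set \<Rightarrow> 'a list set" where
  "lderiv a K = {w. a # w \<in> K}"

definition rderiv :: "'a \<Rightarrow> 'a list set \<Rightarrow> 'a list set" where
  "rderiv a K = {w. w @ [a] \<in> K}"

definition lang_rev :: "'a list set \<Rightarrow> 'a list set" where
  "lang_rev L = rev ` L"

definition bool_subalg :: "'a list set set \<Rightarrow> bool" where
  "bool_subalg B \<longleftrightarrow> B \<subseteq> Reg \<and> {} \<in> B \<and> UNIV \<in> B \<and>
     (\<forall>K\<in>B. \<forall>K'\<in>B. K \<union> K' \<in> B \<and> K \<inter> K' \<in> B) \<and> (\<forall>K\<in>B. - K \<in> B)"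

definition subcoalg :: "'a list set set \<Rightarrow> bool" where
  "subcoalg B \<longleftrightarrow> bool_subalg B \<and> (\<forall>a. \<forall>K\<in>B. lderiv a K \<in> B)"

definition local_variety :: "'a list set set \<Rightarrow> bool" where
  "local_variety B \<longleftrightarrow> subcoalg B \<and> (\<forall>a. \<forall>K\<in>B. rderiv a K \<in> B)"

definition subcoalg_gen :: "'a list set \<Rightarrow> 'a list set set" where
  "subcoalg_gen K = \<Inter> {B. subcoalg B \<and> K \<in> B}"

definition local_variety_gen :: "'a list set \<Rightarrow> 'a list set set" where
  "local_variety_gen K = \<Inter> {B. local_variety B \<and> K \<in> B}"

text \<open>The dual F-algebra of a finite subcoalgebra B (a boolean algebra of sets):
  states are atoms, initial state the atom with f(z)=1, i.e. containing the empty word,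
  and z --a--> z' iff z' is the unique atom with gamma_a(z') >= z.\<close>
definition atoms :: "'a list set set \<Rightarrow> 'a list set set" where
  "atoms B = {z \<in> B. z \<noteq> {} \<and> (\<forall>y\<in>B. y \<subseteq> z \<longrightarrow> y = {} \<or> y = z)}"

definition dual_init :: "'a list set set \<Rightarrow> 'a list set" where
  "dual_init B = (THE z. z \<in> atoms B \<and> [] \<in> z)"

definition dual_trans :: "'a list set set \<Rightarrow> 'a \<Rightarrow> 'a list set \<Rightarrow> 'a list set" where
  "dual_trans B a z = (THE z'. z' \<in> atoms B \<and> z \<subseteq> lderiv a z')"

definition falg_iso :: "'s set \<Rightarrow> ('a \<Rightarrow> 's \<Rightarrow> 's) \<Rightarrow> 's \<Rightarrow>
    't set \<Rightarrow> ('a \<Rightarrow> 't \<Rightarrow> 't) \<Rightarrow> 't \<Rightarrow> bool" where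
  "falg_iso Q d i Q' d' i' \<longleftrightarrow> (\<exists>h. bij_betw h Q Q' \<and> h i = i' \<and>
     (\<forall>a. \<forall>q\<in>Q. h (d a q) = d' a (h q)))"

definition min_states :: "'a list set \<Rightarrow> 'a list set set" where
  "min_states L = range (\<lambda>u. {w. u @ w \<in> L})"

definition min_init :: "'a list set \<Rightarrow> 'a list set" where
  "min_init L = L"

definition min_trans :: "'a \<Rightarrow> 'a list set \<Rightarrow> 'a list set" where
  "min_trans a K = lderiv a K"

definition syn_equiv :: "'a list set \<Rightarrow> 'a list \<Rightarrow> 'a list \<Rightarrow> bool" where
  "syn_equiv L u v \<longleftrightarrow> (\<forall>x y. x @ u @ y \<in> L \<longleftrightarrow> x @ v @ y \<in> L)"

definition syn_e :: "'a list set \<Rightarrow> 'a list \<Rightarrow> 'a list set" where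
  "syn_e L u = {v. syn_equiv L u v}"

definition Syn :: "'a list set \<Rightarrow> 'a list set set" where
  "Syn L = range (syn_e L)"

definition syn_mult :: "'a list set \<Rightarrow> 'a list set \<Rightarrow> 'a list set \<Rightarrow> 'a list set" where
  "syn_mult L m n = syn_e L ((SOME u. m = syn_e L u) @ (SOME v. n = syn_e L v))"

definition syn_unit :: "'a list set \<Rightarrow> 'a list set" where
  "syn_unit L = syn_e L []"

definition syn_trans :: "'a list set \<Rightarrow> 'a \<Rightarrow> 'a list set \<Rightarrow> 'a list set" where
  "syn_trans L a m = syn_mult L m (syn_e L [a])"

end

theory Submission
  imports Defs
begin

text \<open>Call two words R-indistinguishable if no language of the family R separates them.
  For a finite family R the boolean algebra generated by R consists of the unions of
  indistinguishability classes, so its atoms are exactly these classes; if R is closed under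
  left derivatives, the dual transition sends the class of w to the class of a w.
  The subcoalgebra generated by the reversal of L is generated, as a boolean algebra, by the
  finitely many left quotients of the reversal, and the local variety by its two-sided
  quotients.  Read backwards, indistinguishability for the former is the Nerode equivalence
  of L and for the latter the syntactic congruence of L; reversal turns the dual transition
  w \<mapsto> a w into u \<mapsto> u a, which is the transition of the minimal automaton and
  right multiplication by e_L(a) in the syntactic monoid, respectively.\<close>

definition indist :: "'a list set set \<Rightarrow> 'a list \<Rightarrow> 'a list \<Rightarrow> bool" where
  "indist R w w' \<longleftrightarrow> (\<forall>K\<in>R. w \<in> K \<longleftrightarrow> w' \<in> K)"

definition indist_class :: "'a list set set \<Rightarrow> 'a list \<Rightarrow> 'a list set" where
  "indist_class R w = {w'. indist R w w'}"

text \<open>For finite R this is the boolean algebra generated by R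
  (lemmas \<open>bool_subalg_saturated\<close> and \<open>saturated_subset_bool_subalg\<close>).\<close>
definition saturated :: "'a list set set \<Rightarrow> 'a list set set" where
  "saturated R = {S. \<forall>w w'. indist R w w' \<longrightarrow> (w \<in> S \<longleftrightarrow> w' \<in> S)}"

lemma indist_refl [simp]: "indist R w w"
  unfolding indist_def by simp

lemma indist_sym: "indist R w w' \<Longrightarrow> indist R w' w"
  unfolding indist_def by blast

lemma mem_indist_class_iff [simp]: "w' \<in> indist_class R w \<longleftrightarrow> indist R w w'"
  unfolding indist_class_def by simp

lemma indist_class_eq_iff: "indist_class R w = indist_class R w' \<longleftrightarrow> indist R w w'"
  unfolding indist_class_def indist_def by (auto simp: set_eq_iff)

lemma indist_class_in_saturated: "indist_class R w \<in> saturated R"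
  unfolding indist_class_def saturated_def indist_def by auto

lemma subset_saturated: "R \<subseteq> saturated R"
  unfolding saturated_def indist_def by auto

lemma saturated_mono: "R \<subseteq> R' \<Longrightarrow> saturated R \<subseteq> saturated R'"
  unfolding saturated_def indist_def by blast

lemma saturatedD: "S \<in> saturated R \<Longrightarrow> indist R w w' \<Longrightarrow> w \<in> S \<Longrightarrow> w' \<in> S"
  unfolding saturated_def by blast

lemma indist_class_subset: "S \<in> saturated R \<Longrightarrow> w \<in> S \<Longrightarrow> indist_class R w \<subseteq> S"
  using saturatedD by fastforce

lemma saturated_eq_Union_indist_class: "S \<in> saturated R \<Longrightarrow> S = \<Union>(indist_class R ` S)"
  using indist_class_subset[of S R] by fastforce

lemma indist_Cons:
  assumes "\<forall>K\<in>R. lderiv a K \<in> R" "indist R w w'"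
  shows "indist R (a # w) (a # w')"
  using assms unfolding indist_def lderiv_def by fastforce

lemma indist_snoc:
  assumes "\<forall>K\<in>R. rderiv a K \<in> R" "indist R w w'"
  shows "indist R (w @ [a]) (w' @ [a])"
  using assms unfolding indist_def rderiv_def by fastforce

lemma lderiv_in_saturated:
  assumes "\<forall>K\<in>R. lderiv a K \<in> R" "S \<in> saturated R"
  shows "lderiv a S \<in> saturated R"
  using assms(2) indist_Cons[OF assms(1)] unfolding saturated_def lderiv_def by blast

lemma rderiv_in_saturated:
  assumes "\<forall>K\<in>R. rderiv a K \<in> R" "S \<in> saturated R"
  shows "rderiv a S \<in> saturated R"
  using assms(2) indist_snoc[OF assms(1)] unfolding saturated_def rderiv_def by blast

subsection \<open>The dual F-algebra of a saturated family\<close>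

lemma atoms_saturated: "atoms (saturated R) = range (indist_class R)"
proof (intro equalityI subsetI)
  fix z assume "z \<in> range (indist_class R)"
  then obtain w where z: "z = indist_class R w" by blast
  have "y = {} \<or> y = z" if y: "y \<in> saturated R" "y \<subseteq> z" for y
  proof (cases "y = {}")
    case False
    then obtain w' where w': "w' \<in> y" by blast
    with y z have "indist_class R w = indist_class R w'"
      by (auto simp: indist_class_eq_iff)
    with y z indist_class_subset[OF y(1) w'] show ?thesis by blast
  qed simp
  moreover have "w \<in> z" using z by simp
  ultimately show "z \<in> atoms (saturated R)"
    unfolding atoms_def using z indist_class_in_saturated[of R w] by blast
next
  fix z assume "z \<in> atoms (saturated R)"
  then have z: "z \<in> saturated R"
    and minimal: "\<forall>y\<in>saturated R. y \<subseteq> z \<longrightarrow> y = {} \<or> y = z"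
    and "z \<noteq> {}"
    unfolding atoms_def by auto
  then obtain w where "w \<in> z" by blast
  moreover have "w \<in> indist_class R w" by simp
  ultimately have "indist_class R w \<subseteq> z" "indist_class R w \<noteq> {}"
    using indist_class_subset[OF z] by blast+
  then have "indist_class R w = z"
    using minimal indist_class_in_saturated by blast
  then show "z \<in> range (indist_class R)" by blast
qed

lemma dual_init_saturated: "dual_init (saturated R) = indist_class R []"
  unfolding dual_init_def
proof (rule the_equality)
  fix z assume "z \<in> atoms (saturated R) \<and> [] \<in> z"
  then obtain w where "z = indist_class R w" "indist R w []"
    unfolding atoms_saturated by auto
  then show "z = indist_class R []" by (simp add: indist_class_eq_iff)
qed (simp add: atoms_saturated)

lemma dual_trans_saturated:
  assumes "\<forall>K\<in>R. lderiv a K \<in> R"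
  shows "dual_trans (saturated R) a (indist_class R w) = indist_class R (a # w)"
  unfolding dual_trans_def
proof (rule the_equality)
  show "indist_class R (a # w) \<in> atoms (saturated R) \<and>
      indist_class R w \<subseteq> lderiv a (indist_class R (a # w))"
    using indist_Cons[OF assms] by (auto simp: atoms_saturated lderiv_def)
next
  fix z assume z: "z \<in> atoms (saturated R) \<and> indist_class R w \<subseteq> lderiv a z"
  moreover have "w \<in> indist_class R w" by simp
  ultimately have "a # w \<in> z" unfolding lderiv_def by blast
  moreover obtain y where "z = indist_class R y"
    using z by (auto simp: atoms_saturated)
  ultimately show "z = indist_class R (a # w)" by (simp add: indist_class_eq_iff)
qed

text \<open>An F-algebra presented by its reachability map \<open>\<phi>\<close> (so \<open>\<phi> u\<close> is the state reached
  by reading u) is the dual of \<open>saturated R\<close> as soon as the kernel of \<open>\<phi>\<close> is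
  R-indistinguishability of the reversed words.\<close>
lemma falg_iso_dual_saturated:
  assumes Q: "Q = range \<phi>" and init: "\<phi> [] = q0"
    and trans: "\<And>a u. \<delta> a (\<phi> u) = \<phi> (u @ [a])"
    and kernel: "\<And>u u'. \<phi> u = \<phi> u' \<longleftrightarrow> indist R (rev u) (rev u')"
    and lderiv_closed: "\<And>a. \<forall>K\<in>R. lderiv a K \<in> R"
  shows "falg_iso Q \<delta> q0
    (atoms (saturated R)) (dual_trans (saturated R)) (dual_init (saturated R))"
proof -
  define h where "h q = indist_class R (rev (SOME u. q = \<phi> u))" for q
  have h_\<phi>: "h (\<phi> u) = indist_class R (rev u)" for u
  proof -
    have "\<phi> u = \<phi> (SOME u'. \<phi> u = \<phi> u')" by (rule someI) (rule refl)
    then show ?thesis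
      unfolding h_def by (metis kernel indist_class_eq_iff)
  qed
  have "inj_on h Q"
    by (rule inj_onI) (auto simp: Q h_\<phi> kernel indist_class_eq_iff)
  moreover have "h ` Q = atoms (saturated R)"
  proof -
    have "h ` Q = indist_class R ` range rev" by (simp only: Q image_image h_\<phi>)
    also have "range rev = UNIV" by (rule surjI[of _ rev]) simp
    finally show ?thesis by (simp add: atoms_saturated)
  qed
  moreover have "h q0 = dual_init (saturated R)"
    using h_\<phi>[of "[]"] by (simp add: init dual_init_saturated)
  moreover have "\<forall>a. \<forall>q\<in>Q. h (\<delta> a q) = dual_trans (saturated R) a (h q)"
    by (auto simp: Q trans h_\<phi> dual_trans_saturated[OF lderiv_closed])
  ultimately show ?thesis unfolding falg_iso_def bij_betw_def by blast
qed

subsection \<open>The boolean algebra generated by a finite family\<close>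

lemma bool_subalg_Inter: "finite F \<Longrightarrow> bool_subalg B \<Longrightarrow> F \<subseteq> B \<Longrightarrow> \<Inter>F \<in> B"
  by (induction F rule: finite_induct) (auto simp: bool_subalg_def)

lemma bool_subalg_Union: "finite F \<Longrightarrow> bool_subalg B \<Longrightarrow> F \<subseteq> B \<Longrightarrow> \<Union>F \<in> B"
  by (induction F rule: finite_induct) (auto simp: bool_subalg_def)

lemma indist_class_eq_Inter:
  "indist_class R w = \<Inter>((\<lambda>K. if w \<in> K then K else - K) ` R)"
  unfolding indist_class_def indist_def by auto

lemma finite_range_indist_class:
  assumes "finite R" shows "finite (range (indist_class R))"
proof (rule finite_subset)
  show "range (indist_class R) \<subseteq> (\<lambda>X. \<Inter>((\<lambda>K. if K \<in> X then K else - K) ` R)) ` Pow R"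
    by (auto simp: indist_class_eq_Inter intro!: image_eqI[where x = "{K\<in>R. _ \<in> K}"])
  show "finite ((\<lambda>X. \<Inter>((\<lambda>K. if K \<in> X then K else - K) ` R)) ` Pow R)"
    using assms by simp
qed

lemma indist_class_in_bool_subalg:
  assumes "finite R" "bool_subalg B" "R \<subseteq> B"
  shows "indist_class R w \<in> B"
  unfolding indist_class_eq_Inter
  using assms by (intro bool_subalg_Inter) (auto simp: bool_subalg_def)

lemma saturated_subset_bool_subalg:
  assumes "finite R" "bool_subalg B" "R \<subseteq> B"
  shows "saturated R \<subseteq> B"
proof
  fix S assume "S \<in> saturated R"
  then have "S = \<Union>(indist_class R ` S)" by (rule saturated_eq_Union_indist_class)
  also have "\<dots> \<in> B"
  proof (rule bool_subalg_Union[OF _ assms(2)])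
    show "finite (indist_class R ` S)"
      using finite_range_indist_class[OF assms(1)] by (rule finite_subset[rotated]) auto
    show "indist_class R ` S \<subseteq> B"
      using indist_class_in_bool_subalg[OF assms] by blast
  qed
  finally show "S \<in> B" .
qed

lemma bool_subalg_saturated: "saturated R \<subseteq> Reg \<Longrightarrow> bool_subalg (saturated R)"
  unfolding bool_subalg_def saturated_def by auto

lemma fold_in_closed:
  "(\<And>a q. q \<in> Q \<Longrightarrow> \<delta> a q \<in> Q) \<Longrightarrow> q \<in> Q \<Longrightarrow> fold \<delta> w q \<in> Q"
  by (induction w arbitrary: q) auto

lemma regular_fold:
  fixes \<delta> :: "'a \<Rightarrow> 's \<Rightarrow> 's"
  assumes "finite Q" "q0 \<in> Q" "\<And>a q. q \<in> Q \<Longrightarrow> \<delta> a q \<in> Q"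
  shows "regular {w. fold \<delta> w q0 \<in> F}"
proof -
  obtain f :: "'s \<Rightarrow> nat" where "bij_betw f Q {0..<card Q}"
    using ex_bij_betw_finite_nat[OF assms(1)] by blast
  then have inj: "inj_on f Q" by (simp add: bij_betw_def)
  define \<delta>' where "\<delta>' a n = f (\<delta> a (inv_into Q f n))" for a n
  have fold_f: "q \<in> Q \<Longrightarrow> fold \<delta>' w (f q) = f (fold \<delta> w q)" for w q
    using assms(3) inj by (induction w arbitrary: q) (auto simp: \<delta>'_def)
  have fold_in: "fold \<delta> w q0 \<in> Q" for w
    using fold_in_closed[of Q \<delta>] assms(2,3) by blast
  have "{w. fold \<delta> w q0 \<in> F} = {w. fold \<delta>' w (f q0) \<in> f ` (F \<inter> Q)}"
    using fold_in inj by (auto simp: fold_f[OF assms(2)] inj_on_image_mem_iff)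
  moreover have "\<forall>a n. n \<in> f ` Q \<longrightarrow> \<delta>' a n \<in> f ` Q"
    using assms(3) by (auto simp: \<delta>'_def inv_into_f_f[OF inj])
  ultimately show ?thesis
    unfolding regular_def using assms(1,2)
    by (intro exI[of _ "f ` Q"] exI[of _ \<delta>'] exI[of _ "f q0"] exI[of _ "f ` (F \<inter> Q)"]) auto
qed

text \<open>If R is closed under right derivatives, indistinguishability is a right congruence of
  finite index, and its classes are the states of an automaton recognising every saturated
  language.\<close>
lemma saturated_subset_Reg:
  assumes "finite R" and rderiv_closed: "\<And>a. \<forall>K\<in>R. rderiv a K \<in> R"
  shows "saturated R \<subseteq> Reg"
proof
  fix S assume S: "S \<in> saturated R"
  define \<delta> where "\<delta> a c = indist_class R ((SOME w. c = indist_class R w) @ [a])" for a c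
  have fold_\<delta>: "fold \<delta> w (indist_class R []) = indist_class R w" for w
  proof (induction w rule: rev_induct)
    case (snoc a w)
    have "indist R (SOME w'. indist_class R w = indist_class R w') w"
      using someI[of "\<lambda>w'. indist_class R w = indist_class R w'" w]
      by (simp add: indist_class_eq_iff indist_sym)
    then have "\<delta> a (indist_class R w) = indist_class R (w @ [a])"
      unfolding \<delta>_def by (simp add: indist_class_eq_iff indist_snoc[OF rderiv_closed])
    with snoc show ?case by simp
  qed simp
  have "S = {w. fold \<delta> w (indist_class R []) \<in> indist_class R ` S}"
    using S by (auto simp: fold_\<delta> indist_class_eq_iff) (metis saturatedD indist_sym)
  also have "regular \<dots>"
    by (rule regular_fold[where Q = "range (indist_class R)"])
      (auto simp: finite_range_indist_class[OF assms(1)] \<delta>_def)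
  finally show "S \<in> Reg" unfolding Reg_def by simp
qed

subsection \<open>Quotients of a language\<close>

definition left_quotients :: "'a list set \<Rightarrow> 'a list set set" where
  "left_quotients K = range (\<lambda>u. {w. u @ w \<in> K})"

definition quotients :: "'a list set \<Rightarrow> 'a list set set" where
  "quotients K = range (\<lambda>(u, v). {w. u @ w @ v \<in> K})"

lemma self_in_left_quotients: "K \<in> left_quotients K"
  unfolding left_quotients_def by (rule range_eqI[of _ _ "[]"]) simp

lemma self_in_quotients: "K \<in> quotients K"
  unfolding quotients_def by (rule range_eqI[of _ _ "([], [])"]) simp

lemma left_quotients_subset_quotients: "left_quotients K \<subseteq> quotients K"
proof
  fix K' assume "K' \<in> left_quotients K"
  then obtain u where "K' = (\<lambda>(u, v). {w. u @ w @ v \<in> K}) (u, [])"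
    unfolding left_quotients_def by auto
  then show "K' \<in> quotients K" unfolding quotients_def by blast
qed

lemma lderiv_left_quotient: "lderiv a {w. u @ w \<in> K} = {w. (u @ [a]) @ w \<in> K}"
  unfolding lderiv_def by simp

lemma lderiv_left_quotients: "\<forall>K'\<in>left_quotients K. lderiv a K' \<in> left_quotients K"
proof
  fix K' assume "K' \<in> left_quotients K"
  then obtain u where "K' = {w. u @ w \<in> K}" unfolding left_quotients_def by blast
  then have "lderiv a K' = {w. (u @ [a]) @ w \<in> K}" by (simp only: lderiv_left_quotient)
  then show "lderiv a K' \<in> left_quotients K" unfolding left_quotients_def by blast
qed

lemma lderiv_quotients: "\<forall>K'\<in>quotients K. lderiv a K' \<in> quotients K"
proof
  fix K' assume "K' \<in> quotients K"
  then obtain u v where "K' = {w. u @ w @ v \<in> K}" unfolding quotients_def by auto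
  then have "lderiv a K' = (\<lambda>(u, v). {w. u @ w @ v \<in> K}) (u @ [a], v)"
    by (simp add: lderiv_def)
  then show "lderiv a K' \<in> quotients K" unfolding quotients_def by blast
qed

lemma rderiv_quotients: "\<forall>K'\<in>quotients K. rderiv a K' \<in> quotients K"
proof
  fix K' assume "K' \<in> quotients K"
  then obtain u v where "K' = {w. u @ w @ v \<in> K}" unfolding quotients_def by auto
  then have "rderiv a K' = (\<lambda>(u, v). {w. u @ w @ v \<in> K}) (u, a # v)"
    by (simp add: rderiv_def)
  then show "rderiv a K' \<in> quotients K" unfolding quotients_def by blast
qed

lemma left_quotient_in_subcoalg: "subcoalg B \<Longrightarrow> K \<in> B \<Longrightarrow> {w. u @ w \<in> K} \<in> B"
proof (induction u arbitrary: K)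
  case (Cons a u)
  then have "lderiv a K \<in> B" unfolding subcoalg_def by blast
  from Cons.IH[OF Cons.prems(1) this] show ?case by (simp add: lderiv_def)
qed simp

lemma right_quotient_in_local_variety:
  "local_variety B \<Longrightarrow> K \<in> B \<Longrightarrow> {w. w @ v \<in> K} \<in> B"
proof (induction v)
  case (Cons a v)
  then have "rderiv a {w. w @ v \<in> K} \<in> B" unfolding local_variety_def by blast
  then show ?case by (simp add: rderiv_def)
qed simp

lemma left_quotients_subset_subcoalg: "subcoalg B \<Longrightarrow> K \<in> B \<Longrightarrow> left_quotients K \<subseteq> B"
  unfolding left_quotients_def using left_quotient_in_subcoalg by blast

lemma quotients_subset_local_variety:
  assumes "local_variety B" "K \<in> B"
  shows "quotients K \<subseteq> B"
proof
  fix K' assume "K' \<in> quotients K"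
  then obtain u v where K': "K' = {w. u @ w \<in> {x. x @ v \<in> K}}"
    unfolding quotients_def by auto
  have "{x. x @ v \<in> K} \<in> B" using right_quotient_in_local_variety[OF assms] .
  then show "K' \<in> B"
    unfolding K' using left_quotient_in_subcoalg assms(1) local_variety_def by blast
qed

lemma subcoalg_gen_eq_saturated:
  assumes "finite (quotients K)"
  shows "subcoalg_gen K = saturated (left_quotients K)"
proof -
  have fin: "finite (left_quotients K)"
    using assms left_quotients_subset_quotients by (rule finite_subset[rotated])
  have "saturated (left_quotients K) \<subseteq> Reg"
    using saturated_mono[OF left_quotients_subset_quotients]
      saturated_subset_Reg[OF assms rderiv_quotients] by blast
  then have "subcoalg (saturated (left_quotients K))"
    unfolding subcoalg_def
    using bool_subalg_saturated lderiv_in_saturated[OF lderiv_left_quotients] by auto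
  moreover have "K \<in> saturated (left_quotients K)"
    using self_in_left_quotients subset_saturated by blast
  moreover have "saturated (left_quotients K) \<subseteq> B" if "subcoalg B" "K \<in> B" for B
  proof (rule saturated_subset_bool_subalg[OF fin])
    show "bool_subalg B" using that(1) unfolding subcoalg_def by simp
    show "left_quotients K \<subseteq> B" using that by (rule left_quotients_subset_subcoalg)
  qed
  ultimately show ?thesis
    unfolding subcoalg_gen_def by (intro cInf_eq_minimum) auto
qed

lemma local_variety_gen_eq_saturated:
  assumes "finite (quotients K)"
  shows "local_variety_gen K = saturated (quotients K)"
proof -
  have "local_variety (saturated (quotients K))"
    unfolding local_variety_def subcoalg_def
    using bool_subalg_saturated[OF saturated_subset_Reg[OF assms rderiv_quotients]]
      lderiv_in_saturated[OF lderiv_quotients] rderiv_in_saturated[OF rderiv_quotients]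
    by auto
  moreover have "K \<in> saturated (quotients K)"
    using self_in_quotients subset_saturated by blast
  moreover have "saturated (quotients K) \<subseteq> B" if "local_variety B" "K \<in> B" for B
  proof (rule saturated_subset_bool_subalg[OF assms])
    show "bool_subalg B" using that(1) unfolding local_variety_def subcoalg_def by simp
    show "quotients K \<subseteq> B" using that by (rule quotients_subset_local_variety)
  qed
  ultimately show ?thesis
    unfolding local_variety_gen_def by (intro cInf_eq_minimum) auto
qed

lemma finite_quotients:
  assumes "regular L" shows "finite (quotients L)"
proof -
  obtain Q :: "nat set" and \<delta> q0 F where Q: "finite Q" "q0 \<in> Q"
    and closed: "\<And>a q. q \<in> Q \<Longrightarrow> \<delta> a q \<in> Q" and L: "L = {w. fold \<delta> w q0 \<in> F}"
    using assms unfolding regular_def by blast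
  define lang where "lang p G = {w. fold \<delta> w p \<in> G}" for p G
  have "quotients L \<subseteq> (\<lambda>(p, G). lang p G) ` (Q \<times> Pow Q)"
  proof
    fix K assume "K \<in> quotients L"
    then obtain u v where K: "K = {w. u @ w @ v \<in> L}" unfolding quotients_def by auto
    have "K = lang (fold \<delta> u q0) {q \<in> Q. fold \<delta> v q \<in> F}"
      unfolding K L lang_def using fold_in_closed[of Q \<delta>] closed Q(2) by auto
    then show "K \<in> (\<lambda>(p, G). lang p G) ` (Q \<times> Pow Q)"
      using fold_in_closed[of Q \<delta>] closed Q(2) by blast
  qed
  then show ?thesis using Q(1) by (auto intro: finite_subset)
qed

lemma mem_lang_rev_iff [simp]: "w \<in> lang_rev L \<longleftrightarrow> rev w \<in> L"
  unfolding lang_rev_def by (metis image_iff rev_rev_ident)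

lemma quotients_lang_rev_subset: "quotients (lang_rev L) \<subseteq> lang_rev ` quotients L"
proof
  fix K assume "K \<in> quotients (lang_rev L)"
  then obtain u v where "K = {w. u @ w @ v \<in> lang_rev L}" unfolding quotients_def by auto
  then have "K = lang_rev {w. rev v @ w @ rev u \<in> L}" by (auto simp: set_eq_iff)
  then show "K \<in> lang_rev ` quotients L" unfolding quotients_def by auto
qed

lemma finite_quotients_lang_rev: "regular L \<Longrightarrow> finite (quotients (lang_rev L))"
  using finite_quotients quotients_lang_rev_subset by (metis finite_imageI finite_subset)

subsection \<open>Nerode equivalence and syntactic congruence\<close>

lemma indist_left_quotients_iff:
  "indist (left_quotients K) w w' \<longleftrightarrow> (\<forall>u. u @ w \<in> K \<longleftrightarrow> u @ w' \<in> K)"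
  unfolding indist_def left_quotients_def by auto

lemma indist_quotients_eq_syn_equiv: "indist (quotients K) = syn_equiv K"
  unfolding indist_def quotients_def syn_equiv_def by (auto simp: fun_eq_iff)

lemma left_quotient_eq_iff_indist:
  "{w. u @ w \<in> L} = {w. u' @ w \<in> L} \<longleftrightarrow> indist (left_quotients (lang_rev L)) (rev u) (rev u')"
  by (simp add: indist_left_quotients_iff set_eq_iff) (metis rev_rev_ident)

lemma syn_equiv_lang_rev: "syn_equiv (lang_rev L) (rev u) (rev u') \<longleftrightarrow> syn_equiv L u u'"
  by (simp add: syn_equiv_def) (metis rev_rev_ident)

lemma syn_equiv_sym: "syn_equiv L u v \<Longrightarrow> syn_equiv L v u"
  unfolding syn_equiv_def by blast

lemma syn_equiv_append:
  assumes "syn_equiv L u u'" "syn_equiv L v v'"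
  shows "syn_equiv L (u @ v) (u' @ v')"
  unfolding syn_equiv_def
proof (intro allI)
  fix x y
  have "x @ (u @ v) @ y \<in> L \<longleftrightarrow> (x @ u) @ v' @ y \<in> L"
    using assms(2) unfolding syn_equiv_def by (metis append.assoc)
  also have "\<dots> \<longleftrightarrow> x @ (u' @ v') @ y \<in> L"
    using assms(1) unfolding syn_equiv_def by (metis append.assoc)
  finally show "x @ (u @ v) @ y \<in> L \<longleftrightarrow> x @ (u' @ v') @ y \<in> L" .
qed

lemma syn_e_eq_iff: "syn_e L u = syn_e L u' \<longleftrightarrow> syn_equiv L u u'"
  unfolding syn_e_def syn_equiv_def by (auto simp: set_eq_iff)

lemma syn_trans_syn_e: "syn_trans L a (syn_e L u) = syn_e L (u @ [a])"
proof -
  define u' where "u' = (SOME u'. syn_e L u = syn_e L u')"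
  define v' where "v' = (SOME v'. syn_e L [a] = syn_e L v')"
  have "syn_e L u = syn_e L u'" "syn_e L [a] = syn_e L v'"
    unfolding u'_def v'_def by (rule someI, rule refl)+
  then have "syn_equiv L (u' @ v') (u @ [a])"
    by (intro syn_equiv_append) (simp_all add: syn_e_eq_iff syn_equiv_sym)
  then show ?thesis
    unfolding syn_trans_def syn_mult_def u'_def [symmetric] v'_def [symmetric]
    by (simp add: syn_e_eq_iff)
qed

lemma minimal_automaton_iso_dual:
  assumes "regular L"
  shows "falg_iso (min_states L) min_trans (min_init L)
    (atoms (subcoalg_gen (lang_rev L))) (dual_trans (subcoalg_gen (lang_rev L)))
    (dual_init (subcoalg_gen (lang_rev L)))"
  unfolding subcoalg_gen_eq_saturated[OF finite_quotients_lang_rev[OF assms]]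
  by (rule falg_iso_dual_saturated[where \<phi> = "\<lambda>u. {w. u @ w \<in> L}"])
    (simp_all add: min_states_def min_init_def min_trans_def lderiv_left_quotient
      left_quotient_eq_iff_indist lderiv_left_quotients)

lemma syntactic_monoid_iso_dual:
  assumes "regular L"
  shows "falg_iso (Syn L) (syn_trans L) (syn_unit L)
    (atoms (local_variety_gen (lang_rev L))) (dual_trans (local_variety_gen (lang_rev L)))
    (dual_init (local_variety_gen (lang_rev L)))"
  unfolding local_variety_gen_eq_saturated[OF finite_quotients_lang_rev[OF assms]]
  by (rule falg_iso_dual_saturated[where \<phi> = "syn_e L"])
    (simp_all add: Syn_def syn_unit_def syn_trans_syn_e syn_e_eq_iff
      indist_quotients_eq_syn_equiv syn_equiv_lang_rev lderiv_quotients)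

theorem mainTheorem13:
  fixes L :: "'a::finite list set"
  assumes "regular L"
  shows "falg_iso (min_states L) min_trans (min_init L)
           (atoms (subcoalg_gen (lang_rev L))) (dual_trans (subcoalg_gen (lang_rev L)))
           (dual_init (subcoalg_gen (lang_rev L)))
       \<and> falg_iso (Syn L) (syn_trans L) (syn_unit L)
           (atoms (local_variety_gen (lang_rev L))) (dual_trans (local_variety_gen (lang_rev L)))
           (dual_init (local_variety_gen (lang_rev L)))"
  using minimal_automaton_iso_dual[OF assms] syntactic_monoid_iso_dual[OF assms] ..

end
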